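(* Let $S\subseteq(0,1)$ be open, $f:S\to(0,1)$ differentiable, and consider a (possibly randomized) Bernoulli factory for $f$ that is fast. Then for every $p\in S$ the output $Y$ satisfies the sequential Cramér–Rao bound $$\operatorname{Var}[Y]\ \ge\ \frac{(f'(p))^2\,p(1-p)}{\mathbb E[N]}.$$
   Context: Let $X=(X_i)$ be i.i.d. Bernoulli with parameter $p\in S$ and $U=(U_i)$ i.i.d. uniform on $(0,1)$, independent of $X$. A (possibly randomized) Bernoulli factory for $f$ consists of measurable stopping functions $\tau_i(x_1,u_1;\dots;x_i,u_i)\in\{0,1\}$ and measurable output functions $\gamma_n(x_1,u_1;\dots;x_n,u_n)\in\{0,1\}$; $N=\min\{i:\tau_i(X_1,U_1;\dots;X_i,U_i)=1\}$ is assumed finite almost surely, and the output $Y=\gamma_N(X_1,U_1;\dots;X_N,U_N)$ satisfies $\Pr[Y=1]=f(p)$ for all $p\in S$. The factory is fast if for every $p\in S$ there exist $A>0$, $\beta<1$ with $\Pr[N>n]\le A\beta^n$ for all $n$. *)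

theory Defs
  imports "HOL-Probability.Probability"
begin

text \<open>Sample points: omega j = (X_(j+1), U_(j+1)), with X a Boolean coin (True = 1)
  and U a real number.\<close>

definition step_space :: "real \<Rightarrow> (bool \<times> real) measure" where
  "step_space p = measure_pmf (bernoulli_pmf p) \<Otimes>\<^sub>M uniform_measure lborel {0<..<1}"

definition seq_space :: "real \<Rightarrow> (nat \<Rightarrow> bool \<times> real) measure" where
  "seq_space p = (\<Pi>\<^sub>M j\<in>(UNIV::nat set). step_space p)"

definition event_space :: "(nat \<Rightarrow> bool \<times> real) measure" where
  "event_space = (\<Pi>\<^sub>M j\<in>(UNIV::nat set). (count_space UNIV \<Otimes>\<^sub>M borel))"

definition depends_on_first :: "nat \<Rightarrow> ((nat \<Rightarrow> bool \<times> real) \<Rightarrow> 'b) \<Rightarrow> bool" where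
  "depends_on_first i g \<longleftrightarrow> (\<forall>\<omega> \<omega>'. (\<forall>j<i. \<omega> j = \<omega>' j) \<longrightarrow> g \<omega> = g \<omega>')"

definition stop_time :: "(nat \<Rightarrow> (nat \<Rightarrow> bool \<times> real) \<Rightarrow> bool) \<Rightarrow> (nat \<Rightarrow> bool \<times> real) \<Rightarrow> nat" where
  "stop_time \<tau> \<omega> = (LEAST i. 0 < i \<and> \<tau> i \<omega>)"

definition factory_output ::
  "(nat \<Rightarrow> (nat \<Rightarrow> bool \<times> real) \<Rightarrow> bool) \<Rightarrow> (nat \<Rightarrow> (nat \<Rightarrow> bool \<times> real) \<Rightarrow> bool)
     \<Rightarrow> (nat \<Rightarrow> bool \<times> real) \<Rightarrow> bool" where
  "factory_output \<tau> \<gamma> \<omega> = \<gamma> (stop_time \<tau> \<omega>) \<omega>"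

definition bernoulli_factory ::
  "real set \<Rightarrow> (real \<Rightarrow> real) \<Rightarrow> (nat \<Rightarrow> (nat \<Rightarrow> bool \<times> real) \<Rightarrow> bool)
     \<Rightarrow> (nat \<Rightarrow> (nat \<Rightarrow> bool \<times> real) \<Rightarrow> bool) \<Rightarrow> bool" where
  "bernoulli_factory S f \<tau> \<gamma> \<longleftrightarrow>
     (\<forall>i. \<tau> i \<in> measurable event_space (count_space UNIV) \<and> depends_on_first i (\<tau> i)) \<and>
     (\<forall>n. \<gamma> n \<in> measurable event_space (count_space UNIV) \<and> depends_on_first n (\<gamma> n)) \<and>
     (\<forall>p\<in>S. (AE \<omega> in seq_space p. \<exists>i>0. \<tau> i \<omega>) \<and>
             measure (seq_space p) {\<omega> \<in> space (seq_space p). factory_output \<tau> \<gamma> \<omega>} = f p)"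

definition fast_factory ::
  "real set \<Rightarrow> (nat \<Rightarrow> (nat \<Rightarrow> bool \<times> real) \<Rightarrow> bool) \<Rightarrow> bool" where
  "fast_factory S \<tau> \<longleftrightarrow>
     (\<forall>p\<in>S. \<exists>A>0. \<exists>\<beta><1. \<forall>n.
        measure (seq_space p) {\<omega> \<in> space (seq_space p). stop_time \<tau> \<omega> > n} \<le> A * \<beta> ^ n)"

end

theory Submission
  imports Defs
begin

text \<open>Let L_q be the likelihood ratio, on the first N observations, of parameter q against p.
  Optional stopping gives E_p L_q = 1 and E_p (Y L_q) = f q, so E_p ((Y - f p)(L_q - 1)) = f q - f p,
  and Cauchy--Schwarz bounds (f q - f p)^2 by Var_p Y * E_p (L_q - 1)^2. The square of a one-step
  ratio is 1 + chi times the one-step ratio of another parameter q', where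
  chi = (q - p)^2 / (p (1 - p)); hence E_p (L_q - 1)^2 = chi * E_p (sum_(i<N) (1 + chi)^i L_q').
  Dividing by (q - p)^2 and letting q tend to p, dominated convergence (the exponential tail of N
  makes theta^N integrable for some theta > 1) turns the last expectation into E_p N.\<close>

lemma prob_space_uniform_unit_interval: "prob_space (uniform_measure lborel {0<..<(1::real)})"
  by (rule prob_space_uniform_measure) auto

lemma prob_space_step_space: "prob_space (step_space q)"
  unfolding step_space_def
  by (intro prob_space_pair prob_space_uniform_unit_interval prob_space_measure_pmf)

lemma sets_step_space: "sets (step_space q) = sets (count_space UNIV \<Otimes>\<^sub>M borel)"
  unfolding step_space_def by (intro sets_pair_measure_cong) auto

lemma sets_seq_space: "sets (seq_space q) = sets event_space"
  unfolding seq_space_def event_space_def by (intro sets_PiM_cong) (auto simp: sets_step_space)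

lemma space_event_space: "space event_space = UNIV"
  by (simp add: event_space_def space_PiM space_pair_measure)

lemma space_seq_space: "space (seq_space q) = UNIV"
  using sets_eq_imp_space_eq[OF sets_seq_space[of q]] by (simp add: space_event_space)

lemma prob_space_seq_space: "prob_space (seq_space q)"
  unfolding seq_space_def by (intro prob_space_PiM prob_space_step_space)

lemma product_prob_space_step_space: "product_prob_space (\<lambda>_::nat. step_space q)"
  unfolding product_prob_space_def product_prob_space_axioms_def product_sigma_finite_def
  using prob_space_step_space by (auto intro: prob_space_imp_sigma_finite)

lemma measurable_seq_space_iff: "g \<in> seq_space q \<rightarrow>\<^sub>M N \<longleftrightarrow> g \<in> event_space \<rightarrow>\<^sub>M N"
  using measurable_cong_sets[OF sets_seq_space[of q] refl, of N] by simp

lemma measurable_component_event_space: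
  "(\<lambda>\<omega>. \<omega> j) \<in> event_space \<rightarrow>\<^sub>M count_space UNIV \<Otimes>\<^sub>M borel"
  unfolding event_space_def by (rule measurable_component_singleton) auto

section \<open>Likelihood ratios of finitely many steps\<close>

definition step_ratio :: "real \<Rightarrow> real \<Rightarrow> bool \<times> real \<Rightarrow> real" where
  "step_ratio p q z = (if fst z then q / p else (1 - q) / (1 - p))"

lemma step_ratio_nonneg: "0 < p \<Longrightarrow> p < 1 \<Longrightarrow> 0 \<le> q \<Longrightarrow> q \<le> 1 \<Longrightarrow> 0 \<le> step_ratio p q z"
  by (auto simp: step_ratio_def)

lemma measurable_step_ratio [measurable]:
  "(\<lambda>z. step_ratio p q z) \<in> borel_measurable (count_space UNIV \<Otimes>\<^sub>M borel)"
  unfolding step_ratio_def by measurable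

lemma measurable_prod_step_ratio:
  "(\<lambda>\<omega>. \<Prod>j<n. step_ratio p q (\<omega> j)) \<in> borel_measurable event_space"
  by (intro borel_measurable_prod measurable_compose[OF measurable_component_event_space]
      measurable_step_ratio)

lemma density_step_space_step_ratio:
  assumes p: "0 < p" "p < 1" and q: "0 \<le> q" "q \<le> 1"
  shows "density (step_space p) (\<lambda>z. ennreal (step_ratio p q z)) = step_space q"
proof (rule measure_eqI)
  show "sets (density (step_space p) (\<lambda>z. ennreal (step_ratio p q z))) = sets (step_space q)"
    by (simp add: sets_step_space)
  fix A assume "A \<in> sets (density (step_space p) (\<lambda>z. ennreal (step_ratio p q z)))"
  then have A: "A \<in> sets (step_space p)" by simp
  define U where "U = uniform_measure lborel {0<..<(1::real)}"
  interpret U: prob_space U unfolding U_def by (rule prob_space_uniform_unit_interval)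
  have A_pair: "A \<in> sets (measure_pmf (bernoulli_pmf r) \<Otimes>\<^sub>M U)" for r
    unfolding U_def using A sets_step_space[of p] sets_step_space[of r] by (simp add: step_space_def)
  have slice: "(\<integral>\<^sup>+ u. ennreal (step_ratio p q (x, u)) * indicator A (x, u) \<partial>U)
      = ennreal (step_ratio p q (x, 0)) * emeasure U (Pair x -` A)" for x
  proof -
    have "(\<integral>\<^sup>+ u. ennreal (step_ratio p q (x, u)) * indicator A (x, u) \<partial>U)
        = (\<integral>\<^sup>+ u. ennreal (step_ratio p q (x, 0)) * indicator (Pair x -` A) u \<partial>U)"
      by (intro nn_integral_cong) (auto simp: step_ratio_def indicator_def)
    also have "\<dots> = ennreal (step_ratio p q (x, 0)) * emeasure U (Pair x -` A)"
      using sets_Pair1[OF A_pair[of p], of x] by (intro nn_integral_cmult_indicator) simp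
    finally show ?thesis .
  qed
  have weights: "ennreal (step_ratio p q (True, 0)) * ennreal p = ennreal q"
      "ennreal (step_ratio p q (False, 0)) * ennreal (1 - p) = ennreal (1 - q)"
    using p q by (simp_all add: step_ratio_def ennreal_mult[symmetric])
  have "emeasure (step_space q) A = (\<integral>\<^sup>+ x. emeasure U (Pair x -` A) \<partial>measure_pmf (bernoulli_pmf q))"
    unfolding step_space_def U_def[symmetric] by (rule U.emeasure_pair_measure_alt[OF A_pair])
  also have "\<dots> = emeasure U (Pair True -` A) * q + emeasure U (Pair False -` A) * (1 - q)"
    using q by simp
  also have "\<dots> = ennreal (step_ratio p q (True, 0)) * emeasure U (Pair True -` A) * p
      + ennreal (step_ratio p q (False, 0)) * emeasure U (Pair False -` A) * (1 - p)"
    unfolding weights[symmetric] by (simp add: ac_simps)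
  also have "\<dots> = (\<integral>\<^sup>+ x. ennreal (step_ratio p q (x, 0)) * emeasure U (Pair x -` A) \<partial>measure_pmf (bernoulli_pmf p))"
    using p by simp
  also have "\<dots> = (\<integral>\<^sup>+ x. \<integral>\<^sup>+ u. ennreal (step_ratio p q (x, u)) * indicator A (x, u) \<partial>U \<partial>measure_pmf (bernoulli_pmf p))"
    by (simp only: slice)
  also have "\<dots> = (\<integral>\<^sup>+ z. ennreal (step_ratio p q z) * indicator A z \<partial>step_space p)"
    unfolding step_space_def U_def[symmetric] using A_pair[of p]
    by (intro U.nn_integral_fst) (simp add: step_ratio_def)
  also have "\<dots> = emeasure (density (step_space p) (\<lambda>z. ennreal (step_ratio p q z))) A"
    using A by (intro emeasure_density[symmetric]) (auto simp: measurable_cong_sets[OF sets_step_space refl])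
  finally show "emeasure (density (step_space p) (\<lambda>z. ennreal (step_ratio p q z))) A = emeasure (step_space q) A"
    by simp
qed

lemma measurable_step_ratio_step_space:
  "(\<lambda>z. ennreal (step_ratio p q z)) \<in> borel_measurable (step_space r)"
  by (simp add: measurable_cong_sets[OF sets_step_space refl])

lemma measurable_prod_step_ratio_PiM:
  fixes n :: nat
  shows "(\<lambda>y. \<Prod>j<n. ennreal (step_ratio p q (y j))) \<in> borel_measurable (PiM {..<n} (\<lambda>_. step_space r))"
proof (intro borel_measurable_prod_ennreal)
  fix j assume "j \<in> {..<n}"
  then have "(\<lambda>y. y j) \<in> PiM {..<n} (\<lambda>_. step_space r) \<rightarrow>\<^sub>M step_space r"
    by (intro measurable_component_singleton)
  then show "(\<lambda>y. ennreal (step_ratio p q (y j))) \<in> borel_measurable (PiM {..<n} (\<lambda>_. step_space r))"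
    by (rule measurable_compose[OF _ measurable_step_ratio_step_space])
qed

lemma indicator_PiE_eq_prod:
  assumes "y \<in> extensional I" "finite I"
  shows "(indicator (Pi\<^sub>E I A) y :: ennreal) = (\<Prod>j\<in>I. indicator (A j) (y j))"
  using assms by (auto simp: indicator_def PiE_iff)

lemma density_PiM_step_ratio:
  fixes n :: nat
  assumes p: "0 < p" "p < 1" and q: "0 \<le> q" "q \<le> 1"
  shows "density (PiM {..<n} (\<lambda>_. step_space p)) (\<lambda>y. \<Prod>j<n. ennreal (step_ratio p q (y j)))
         = PiM {..<n} (\<lambda>_. step_space q)"
proof -
  interpret Q: product_prob_space "\<lambda>_::nat. step_space q" "UNIV::nat set"
    by (rule product_prob_space_step_space)
  interpret P: product_prob_space "\<lambda>_::nat. step_space p" "UNIV::nat set"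
    by (rule product_prob_space_step_space)
  show ?thesis
  proof (rule Q.PiM_eqI)
    show "sets (density (PiM {..<n} (\<lambda>_. step_space p)) (\<lambda>y. \<Prod>j<n. ennreal (step_ratio p q (y j))))
        = sets (PiM {..<n} (\<lambda>_. step_space q))"
      by (simp add: sets_step_space cong: sets_PiM_cong)
    fix A assume "\<And>i. i \<in> {..<n} \<Longrightarrow> A i \<in> sets (step_space q)"
    then have A: "A i \<in> sets (step_space p)" if "i \<in> {..<n}" for i
      using that by (simp add: sets_step_space)
    have "emeasure (density (PiM {..<n} (\<lambda>_. step_space p)) (\<lambda>y. \<Prod>j<n. ennreal (step_ratio p q (y j)))) (Pi\<^sub>E {..<n} A)
       = (\<integral>\<^sup>+ y. (\<Prod>j<n. ennreal (step_ratio p q (y j))) * indicator (Pi\<^sub>E {..<n} A) y \<partial>PiM {..<n} (\<lambda>_. step_space p))"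
      using A by (intro emeasure_density measurable_prod_step_ratio_PiM sets_PiM_I_finite) auto
    also have "\<dots> = (\<integral>\<^sup>+ y. (\<Prod>j<n. ennreal (step_ratio p q (y j)) * indicator (A j) (y j)) \<partial>PiM {..<n} (\<lambda>_. step_space p))"
      by (intro nn_integral_cong)
        (simp add: indicator_PiE_eq_prod prod.distrib space_PiM PiE_iff)
    also have "\<dots> = (\<Prod>j<n. \<integral>\<^sup>+ z. ennreal (step_ratio p q z) * indicator (A j) z \<partial>step_space p)"
      using A by (intro P.product_nn_integral_prod)
        (auto intro!: borel_measurable_times_ennreal measurable_step_ratio_step_space)
    also have "\<dots> = (\<Prod>j<n. emeasure (step_space q) (A j))"
      using A by (intro prod.cong refl)
        (simp add: emeasure_density[symmetric] measurable_step_ratio_step_space density_step_space_step_ratio[OF p q])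
    finally show "emeasure (density (PiM {..<n} (\<lambda>_. step_space p)) (\<lambda>y. \<Prod>j<n. ennreal (step_ratio p q (y j)))) (Pi\<^sub>E {..<n} A)
       = (\<Prod>j\<in>{..<n}. emeasure (step_space q) (A j))" .
  qed simp
qed

lemma nn_integral_seq_space_change:
  fixes n :: nat and g :: "(nat \<Rightarrow> bool \<times> real) \<Rightarrow> ennreal"
  assumes p: "0 < p" "p < 1" and q: "0 \<le> q" "q \<le> 1"
    and g: "g \<in> borel_measurable event_space" and g_dep: "depends_on_first n g"
  shows "(\<integral>\<^sup>+\<omega>. g \<omega> \<partial>seq_space q) = (\<integral>\<^sup>+\<omega>. ennreal (\<Prod>j<n. step_ratio p q (\<omega> j)) * g \<omega> \<partial>seq_space p)"
proof -
  interpret Q: product_prob_space "\<lambda>_::nat. step_space q" "UNIV::nat set"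
    by (rule product_prob_space_step_space)
  interpret P: product_prob_space "\<lambda>_::nat. step_space p" "UNIV::nat set"
    by (rule product_prob_space_step_space)
  text \<open>g factors through the restriction to the first n coordinates; ext is a measurable
    right inverse of that restriction.\<close>
  define ext where "ext y = (\<lambda>j. if j < n then y j else (True, 0::real))" for y :: "nat \<Rightarrow> bool \<times> real"
  have ext: "ext \<in> PiM {..<n} (\<lambda>_. step_space r) \<rightarrow>\<^sub>M event_space" for r
    unfolding event_space_def ext_def
  proof (rule measurable_PiM_single')
    fix i :: nat
    show "(\<lambda>y. if i < n then y i else (True, 0::real)) \<in> PiM {..<n} (\<lambda>_. step_space r) \<rightarrow>\<^sub>M count_space UNIV \<Otimes>\<^sub>M borel"
    proof (cases "i < n")
      case True
      then have "(\<lambda>y. y i) \<in> PiM {..<n} (\<lambda>_. step_space r) \<rightarrow>\<^sub>M step_space r"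
        by (intro measurable_component_singleton) auto
      with True show ?thesis by (simp add: measurable_cong_sets[OF refl sets_step_space])
    qed simp
  qed (auto simp: space_pair_measure)
  have g_ext: "g (ext (restrict \<omega> {..<n})) = g \<omega>" for \<omega>
    using g_dep unfolding depends_on_first_def by (simp add: ext_def)
  have g_ext_measurable: "(\<lambda>y. g (ext y)) \<in> borel_measurable (PiM {..<n} (\<lambda>_. step_space r))" for r
    using measurable_comp[OF ext g] by (simp add: comp_def)
  have restrict: "(\<lambda>\<omega>. restrict \<omega> {..<n}) \<in> seq_space r \<rightarrow>\<^sub>M PiM {..<n} (\<lambda>_. step_space r)" for r
    unfolding seq_space_def by (rule measurable_restrict_subset) auto
  have "(\<integral>\<^sup>+\<omega>. g \<omega> \<partial>seq_space q) = (\<integral>\<^sup>+\<omega>. g (ext (restrict \<omega> {..<n})) \<partial>seq_space q)"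
    by (simp only: g_ext)
  also have "\<dots> = (\<integral>\<^sup>+y. g (ext y) \<partial>distr (seq_space q) (PiM {..<n} (\<lambda>_. step_space q)) (\<lambda>\<omega>. restrict \<omega> {..<n}))"
    by (rule nn_integral_distr[symmetric, OF restrict]) (simp only: measurable_distr_eq1 g_ext_measurable)
  also have "distr (seq_space q) (PiM {..<n} (\<lambda>_. step_space q)) (\<lambda>\<omega>. restrict \<omega> {..<n}) = PiM {..<n} (\<lambda>_. step_space q)"
    unfolding seq_space_def by (rule Q.distr_PiM_restrict_finite) auto
  also have "\<dots> = density (PiM {..<n} (\<lambda>_. step_space p)) (\<lambda>y. \<Prod>j<n. ennreal (step_ratio p q (y j)))"
    by (rule density_PiM_step_ratio[symmetric, OF p q])
  also have "(\<integral>\<^sup>+y. g (ext y) \<partial>\<dots>) = (\<integral>\<^sup>+y. (\<Prod>j<n. ennreal (step_ratio p q (y j))) * g (ext y) \<partial>PiM {..<n} (\<lambda>_. step_space p))"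
    by (intro nn_integral_density measurable_prod_step_ratio_PiM g_ext_measurable)
  also have "PiM {..<n} (\<lambda>_. step_space p) = distr (seq_space p) (PiM {..<n} (\<lambda>_. step_space p)) (\<lambda>\<omega>. restrict \<omega> {..<n})"
    unfolding seq_space_def by (rule P.distr_PiM_restrict_finite[symmetric]) auto
  also have "(\<integral>\<^sup>+y. (\<Prod>j<n. ennreal (step_ratio p q (y j))) * g (ext y) \<partial>\<dots>)
      = (\<integral>\<^sup>+\<omega>. (\<Prod>j<n. ennreal (step_ratio p q (restrict \<omega> {..<n} j))) * g (ext (restrict \<omega> {..<n})) \<partial>seq_space p)"
    by (rule nn_integral_distr[OF restrict]) (simp only: measurable_distr_eq1,
        intro borel_measurable_times_ennreal measurable_prod_step_ratio_PiM g_ext_measurable)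
  also have "\<dots> = (\<integral>\<^sup>+\<omega>. ennreal (\<Prod>j<n. step_ratio p q (\<omega> j)) * g \<omega> \<partial>seq_space p)"
    using p q by (intro nn_integral_cong) (simp add: g_ext prod_ennreal step_ratio_nonneg)
  finally show ?thesis .
qed

section \<open>Squared likelihood ratios\<close>

text \<open>chi_square p q is the chi-square divergence of Bernoulli q from Bernoulli p, and squared_tilt p q
  is the parameter whose one-step ratio is the square of that of q divided by 1 + chi_square p q.\<close>
definition chi_square :: "real \<Rightarrow> real \<Rightarrow> real" where
  "chi_square p q = (q - p)\<^sup>2 / (p * (1 - p))"

definition squared_tilt :: "real \<Rightarrow> real \<Rightarrow> real" where
  "squared_tilt p q = q\<^sup>2 / (p * (1 + chi_square p q))"

lemma chi_square_nonneg: "0 < p \<Longrightarrow> p < 1 \<Longrightarrow> 0 \<le> chi_square p q"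
  by (simp add: chi_square_def)

lemma step_ratio_square:
  assumes p: "0 < p" "p < 1"
  shows "(step_ratio p q z)\<^sup>2 = (1 + chi_square p q) * step_ratio p (squared_tilt p q) z"
proof -
  define D where "D = p * (1 - p) + (q - p)\<^sup>2"
  have D: "0 < D" using p by (simp add: D_def add_pos_nonneg)
  have chi: "1 + chi_square p q = D / (p * (1 - p))"
    using p by (simp add: chi_square_def D_def field_simps)
  have tilt: "squared_tilt p q = q\<^sup>2 * (1 - p) / D"
    using p D unfolding squared_tilt_def chi by (simp add: field_simps)
  have tilt_compl: "1 - squared_tilt p q = p * (1 - q)\<^sup>2 / D"
    using D unfolding tilt by (simp add: field_simps D_def power2_eq_square)
  show ?thesis
  proof (cases "fst z")
    case True
    then show ?thesis
      using p D unfolding step_ratio_def chi tilt by (simp add: field_simps power2_eq_square)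
  next
    case False
    have "(s / r)\<^sup>2 = D / (p * r) * (p * s\<^sup>2 / D / r)" if "r \<noteq> 0" for r s
      using that p D by (simp add: field_simps power2_eq_square)
    with False p show ?thesis unfolding step_ratio_def chi tilt_compl by simp
  qed
qed

lemma prod_step_ratio_square:
  assumes "0 < p" "p < 1"
  shows "(\<Prod>j<n. step_ratio p q (\<omega> j))\<^sup>2
         = (1 + chi_square p q) ^ n * (\<Prod>j<n. step_ratio p (squared_tilt p q) (\<omega> j))"
  using assms by (simp add: prod_power_distrib step_ratio_square prod.distrib)

lemma tendsto_chi_square:
  assumes "0 < p" "p < 1" "(q \<longlongrightarrow> p) F"
  shows "((\<lambda>k. chi_square p (q k)) \<longlongrightarrow> 0) F"
proof -
  have "((\<lambda>k. (q k - p)\<^sup>2 / (p * (1 - p))) \<longlongrightarrow> (p - p)\<^sup>2 / (p * (1 - p))) F"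
    using assms by (intro tendsto_intros) auto
  then show ?thesis by (simp add: chi_square_def)
qed

lemma tendsto_squared_tilt:
  assumes "0 < p" "p < 1" "(q \<longlongrightarrow> p) F"
  shows "((\<lambda>k. squared_tilt p (q k)) \<longlongrightarrow> p) F"
proof -
  have "((\<lambda>k. (q k)\<^sup>2 / (p * (1 + chi_square p (q k)))) \<longlongrightarrow> p\<^sup>2 / (p * (1 + 0))) F"
    using assms by (intro tendsto_intros tendsto_chi_square) auto
  then show ?thesis using assms by (simp add: squared_tilt_def power2_eq_square)
qed

lemma tendsto_step_ratio:
  assumes "0 < p" "p < 1" "(q \<longlongrightarrow> p) F"
  shows "((\<lambda>k. step_ratio p (q k) z) \<longlongrightarrow> 1) F"
proof -
  have "((\<lambda>k. q k / p) \<longlongrightarrow> p / p) F" "((\<lambda>k. (1 - q k) / (1 - p)) \<longlongrightarrow> (1 - p) / (1 - p)) F"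
    using assms by (intro tendsto_intros; simp)+
  then show ?thesis using assms by (cases "fst z") (simp_all add: step_ratio_def)
qed

lemma sum_power_mult_prod_step_ratio_bounds:
  fixes n :: nat
  assumes p: "0 < p" "p < 1" and q: "p \<le> q" "q \<le> 1" "q \<le> \<rho> * p" and \<rho>: "1 < \<rho>"
  defines "\<delta> \<equiv> chi_square p q"
  shows "0 \<le> (\<Sum>i<n. (1 + \<delta>) ^ i) * (\<Prod>j<n. step_ratio p (squared_tilt p q) (\<omega> j))"
    and "(\<Sum>i<n. (1 + \<delta>) ^ i) * (\<Prod>j<n. step_ratio p (squared_tilt p q) (\<omega> j)) \<le> \<rho> ^ (3 * n) / (\<rho> - 1)"
proof -
  have \<delta>: "0 \<le> \<delta>" using p by (simp add: \<delta>_def chi_square_nonneg)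
  have tilt_ratio_nonneg: "0 \<le> step_ratio p (squared_tilt p q) z" for z
  proof -
    have "0 \<le> (1 + \<delta>) * step_ratio p (squared_tilt p q) z"
      unfolding \<delta>_def step_ratio_square[OF p, symmetric] by simp
    with \<delta> show ?thesis by (simp add: zero_le_mult_iff)
  qed
  have prod_tilt: "0 \<le> (\<Prod>j<n. step_ratio p (squared_tilt p q) (\<omega> j))"
    by (intro prod_nonneg tilt_ratio_nonneg)
  show "0 \<le> (\<Sum>i<n. (1 + \<delta>) ^ i) * (\<Prod>j<n. step_ratio p (squared_tilt p q) (\<omega> j))"
    using \<delta> prod_tilt by (intro mult_nonneg_nonneg sum_nonneg) auto
  have ratio_le: "0 \<le> step_ratio p q z \<and> step_ratio p q z \<le> \<rho>" for z
  proof -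
    have "q / p \<le> \<rho>" "(1 - q) / (1 - p) \<le> 1" using p q by (simp_all add: divide_le_eq)
    moreover have "step_ratio p q z = q / p \<or> step_ratio p q z = (1 - q) / (1 - p)"
      by (simp add: step_ratio_def)
    ultimately have "step_ratio p q z \<le> \<rho>" using \<rho> by (elim disjE) linarith+
    with step_ratio_nonneg[of p q z] p q show ?thesis by simp
  qed
  have prod_le: "(\<Prod>j<n. step_ratio p q (\<omega> j))\<^sup>2 \<le> (\<rho> ^ n)\<^sup>2"
    using ratio_le \<rho> prod_le_power[of "{..<n}" "\<lambda>j. step_ratio p q (\<omega> j)" \<rho>]
    by (intro power_mono prod_nonneg) auto
  have n_le: "real n \<le> \<rho> ^ n / (\<rho> - 1)"
    using Bernoulli_inequality[of "\<rho> - 1" n] \<rho> by (simp add: le_divide_eq mult.commute)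
  have "(\<Sum>i<n. (1 + \<delta>) ^ i) * (\<Prod>j<n. step_ratio p (squared_tilt p q) (\<omega> j))
      \<le> (real n * (1 + \<delta>) ^ n) * (\<Prod>j<n. step_ratio p (squared_tilt p q) (\<omega> j))"
    using \<delta> prod_tilt
    by (intro mult_right_mono order_trans[OF sum_bounded_above[of "{..<n}" _ "(1 + \<delta>) ^ n"]])
      (auto intro: power_increasing)
  also have "\<dots> = real n * (\<Prod>j<n. step_ratio p q (\<omega> j))\<^sup>2"
    by (simp add: \<delta>_def prod_step_ratio_square[OF p])
  also have "\<dots> \<le> \<rho> ^ n / (\<rho> - 1) * (\<rho> ^ n)\<^sup>2"
    using prod_le n_le by (intro mult_mono) auto
  also have "\<dots> = \<rho> ^ (3 * n) / (\<rho> - 1)"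
    by (simp add: power_mult[symmetric] power_add[symmetric] numeral_3_eq_3)
  finally show "(\<Sum>i<n. (1 + \<delta>) ^ i) * (\<Prod>j<n. step_ratio p (squared_tilt p q) (\<omega> j)) \<le> \<rho> ^ (3 * n) / (\<rho> - 1)" .
qed

lemma (in prob_space) integrable_power_of_point_mass_bound:
  fixes N :: "'a \<Rightarrow> nat"
  assumes N: "N \<in> M \<rightarrow>\<^sub>M count_space UNIV"
    and point_mass: "\<And>n. prob {\<omega>\<in>space M. N \<omega> = n} \<le> C * b ^ n"
    and b: "0 \<le> b" and \<theta>: "0 \<le> \<theta>" "\<theta> * b < 1"
  shows "integrable M (\<lambda>\<omega>. \<theta> ^ N \<omega>)"
proof -
  have N_eq: "{\<omega>\<in>space M. N \<omega> = n} \<in> events" for n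
    using N by measurable
  have C: "0 \<le> C" using point_mass[of 0] measure_nonneg[of M] by (metis order_trans mult.right_neutral power_0)
  have sum_point_masses: "ennreal (\<theta> ^ N \<omega>) = (\<Sum>n. ennreal (\<theta> ^ n) * indicator {\<omega>\<in>space M. N \<omega> = n} \<omega>)"
    if "\<omega> \<in> space M" for \<omega>
  proof -
    have "(\<lambda>n. ennreal (\<theta> ^ n) * indicator {\<omega>\<in>space M. N \<omega> = n} \<omega>) = (\<lambda>n. if n = N \<omega> then ennreal (\<theta> ^ N \<omega>) else 0)"
      using that by (auto simp: indicator_def)
    moreover have "(\<lambda>n. if n = N \<omega> then ennreal (\<theta> ^ N \<omega>) else 0) sums ennreal (\<theta> ^ N \<omega>)"
      using sums_single[of "N \<omega>" "\<lambda>_. ennreal (\<theta> ^ N \<omega>)"] by simp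
    ultimately show ?thesis by (simp add: sums_iff)
  qed
  have "(\<integral>\<^sup>+\<omega>. ennreal (\<theta> ^ N \<omega>) \<partial>M) = (\<Sum>n. ennreal (\<theta> ^ n) * emeasure M {\<omega>\<in>space M. N \<omega> = n})"
    using N_eq by (simp add: nn_integral_cong[OF sum_point_masses] nn_integral_suminf nn_integral_cmult_indicator)
  also have "\<dots> \<le> (\<Sum>n. ennreal (C * (\<theta> * b) ^ n))"
  proof (intro suminf_le allI)
    fix n
    have "\<theta> ^ n * prob {\<omega>\<in>space M. N \<omega> = n} \<le> C * (\<theta> * b) ^ n"
      using mult_left_mono[OF point_mass[of n] zero_le_power[OF \<theta>(1)]] by (simp add: power_mult_distrib ac_simps)
    then show "ennreal (\<theta> ^ n) * emeasure M {\<omega>\<in>space M. N \<omega> = n} \<le> ennreal (C * (\<theta> * b) ^ n)"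
      using \<theta> by (simp add: emeasure_eq_measure ennreal_mult[symmetric] ennreal_leI)
  qed auto
  also have "\<dots> < \<infinity>"
    using \<theta> b C by (simp add: suminf_ennreal2 summable_mult summable_geometric)
  finally have "(\<integral>\<^sup>+\<omega>. ennreal (\<theta> ^ N \<omega>) \<partial>M) < \<infinity>" .
  moreover have "(\<lambda>\<omega>. \<theta> ^ N \<omega>) \<in> borel_measurable M"
    using N by measurable
  ultimately show ?thesis
    using \<theta> by (intro integrableI_bounded) simp_all
qed

lemma (in prob_space) integrable_power_of_geometric_tail:
  fixes N :: "'a \<Rightarrow> nat"
  assumes N: "N \<in> M \<rightarrow>\<^sub>M count_space UNIV"
    and tail: "\<And>n. prob {\<omega>\<in>space M. n < N \<omega>} \<le> A * \<beta> ^ n" and A: "0 < A" and \<beta>: "\<beta> < 1"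
  obtains \<theta> :: real where "1 < \<theta>" "integrable M (\<lambda>\<omega>. \<theta> ^ N \<omega>)"
proof -
  have "0 \<le> A * \<beta>" using tail[of 1] measure_nonneg[of M] by (metis order_trans power_one_right)
  then have \<beta>_nonneg: "0 \<le> \<beta>" using A by (simp add: zero_le_mult_iff)
  define b where "b = max \<beta> (1/2)"
  define C where "C = max 1 (A / b)"
  have b: "\<beta> \<le> b" "0 < b" "b < 1" using \<beta> by (auto simp: b_def)
  have point_mass: "prob {\<omega>\<in>space M. N \<omega> = n} \<le> C * b ^ n" for n
  proof (cases n)
    case 0
    then show ?thesis using prob_le_1[of "{\<omega>\<in>space M. N \<omega> = n}"] by (simp add: C_def le_max_iff_disj)
  next
    case (Suc m)
    have "prob {\<omega>\<in>space M. N \<omega> = n} \<le> prob {\<omega>\<in>space M. m < N \<omega>}"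
      using Suc N by (intro finite_measure_mono) (auto, measurable)
    also have "\<dots> \<le> A * b ^ m" using tail[of m] A b \<beta>_nonneg
      by (meson mult_left_mono order_trans power_mono less_imp_le)
    also have "\<dots> = A / b * b ^ n" using b Suc by simp
    also have "\<dots> \<le> C * b ^ n" using b by (intro mult_right_mono) (auto simp: C_def)
    finally show ?thesis .
  qed
  have \<theta>: "1 < 2 / (1 + b)" "2 / (1 + b) * b < 1" using b by (auto simp: field_simps)
  show ?thesis
    using b \<theta> by (intro that[OF \<theta>(1)] integrable_power_of_point_mass_bound[OF N point_mass]) auto
qed

lemma quadratic_nonneg_imp_square_le:
  fixes a b c :: real
  assumes nonneg: "\<And>t. 0 \<le> a * t\<^sup>2 - 2 * b * t + c" and a: "0 \<le> a"
  shows "b\<^sup>2 \<le> a * c"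
proof (cases "a = 0")
  case True
  have "b = 0"
  proof (rule ccontr)
    assume "b \<noteq> 0"
    then show False
      using nonneg[of "(c + 1) / (2 * b)"] True by (simp add: field_simps)
  qed
  then show ?thesis using True by simp
next
  case False
  have "0 \<le> a * (b / a)\<^sup>2 - 2 * b * (b / a) + c" by (rule nonneg)
  with a False show ?thesis by (simp add: field_simps power2_eq_square)
qed

lemma Cauchy_Schwarz_integral:
  fixes U V :: "'a \<Rightarrow> real"
  assumes U: "integrable M (\<lambda>x. (U x)\<^sup>2)" and V: "integrable M (\<lambda>x. (V x)\<^sup>2)"
    and UV: "integrable M (\<lambda>x. U x * V x)"
  shows "(\<integral>x. U x * V x \<partial>M)\<^sup>2 \<le> (\<integral>x. (U x)\<^sup>2 \<partial>M) * (\<integral>x. (V x)\<^sup>2 \<partial>M)"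
proof (rule quadratic_nonneg_imp_square_le)
  fix t :: real
  have "(\<integral>x. (t * U x - V x)\<^sup>2 \<partial>M) = (\<integral>x. t\<^sup>2 * (U x)\<^sup>2 - 2 * t * (U x * V x) + (V x)\<^sup>2 \<partial>M)"
    by (simp add: power2_eq_square algebra_simps)
  also have "(\<integral>x. t\<^sup>2 * (U x)\<^sup>2 - 2 * t * (U x * V x) + (V x)\<^sup>2 \<partial>M)
      = t\<^sup>2 * (\<integral>x. (U x)\<^sup>2 \<partial>M) - 2 * t * (\<integral>x. U x * V x \<partial>M) + (\<integral>x. (V x)\<^sup>2 \<partial>M)"
    using U V UV by (simp add: Bochner_Integration.integral_add Bochner_Integration.integral_diff
        Bochner_Integration.integrable_diff)
  finally have "(\<integral>x. (t * U x - V x)\<^sup>2 \<partial>M)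
      = (\<integral>x. (U x)\<^sup>2 \<partial>M) * t\<^sup>2 - 2 * (\<integral>x. U x * V x \<partial>M) * t + (\<integral>x. (V x)\<^sup>2 \<partial>M)"
    by (simp add: ac_simps)
  moreover have "0 \<le> (\<integral>x. (t * U x - V x)\<^sup>2 \<partial>M)" by simp
  ultimately show "0 \<le> (\<integral>x. (U x)\<^sup>2 \<partial>M) * t\<^sup>2 - 2 * (\<integral>x. U x * V x \<partial>M) * t + (\<integral>x. (V x)\<^sup>2 \<partial>M)"
    by simp
qed simp

lemma tendsto_difference_quotient:
  assumes "(f has_real_derivative f') (at p)" "q \<longlonglongrightarrow> p" "\<And>k. q k \<noteq> p"
  shows "(\<lambda>k. (f (q k) - f p) / (q k - p)) \<longlonglongrightarrow> f'"
proof -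
  have "filterlim q (at p) sequentially"
    using assms(2,3) by (auto simp: filterlim_at)
  with assms(1) show ?thesis
    by (auto simp: has_field_derivative_iff intro: filterlim_compose)
qed

lemma open_obtains_seq_from_above:
  fixes S :: "real set"
  assumes "open S" "p \<in> S" "0 < p" "1 < \<rho>"
  obtains q where "q \<longlonglongrightarrow> p" "\<And>k. q k \<in> S" "\<And>k. p < q k" "\<And>k. q k \<le> \<rho> * p"
proof -
  obtain e where e: "0 < e" "ball p e \<subseteq> S" using assms open_contains_ball by blast
  define d where "d = min (e / 2) ((\<rho> - 1) * p)"
  have d: "0 < d" "d < e" "d \<le> (\<rho> - 1) * p" using e assms by (auto simp: d_def)
  define q where "q k = p + d / real (Suc k)" for k
  have step: "0 < d / real (Suc k)" "d / real (Suc k) \<le> d" for k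
    using d by (auto simp: divide_le_eq)
  have "q \<longlonglongrightarrow> p + 0"
    unfolding q_def by (intro tendsto_intros LIMSEQ_Suc[OF lim_const_over_n])
  moreover have "q k \<in> S" for k
    using step[of k] d e by (auto simp: q_def dist_real_def intro!: subsetD[OF e(2)])
  moreover have "p < q k" "q k \<le> \<rho> * p" for k
    using step[of k] d by (auto simp: q_def algebra_simps)
  ultimately show ?thesis using that by simp
qed

section \<open>Stopped likelihood ratios\<close>

lemma depends_on_first_comp: "depends_on_first n g \<Longrightarrow> depends_on_first n (\<lambda>\<omega>. h (g \<omega>))"
  unfolding depends_on_first_def by metis

lemma depends_on_first_comp2:
  "depends_on_first n f \<Longrightarrow> depends_on_first n g \<Longrightarrow> depends_on_first n (\<lambda>\<omega>. h (f \<omega>) (g \<omega>))"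
  unfolding depends_on_first_def by metis

definition stops_at :: "(nat \<Rightarrow> (nat \<Rightarrow> bool \<times> real) \<Rightarrow> bool) \<Rightarrow> nat \<Rightarrow> (nat \<Rightarrow> bool \<times> real) \<Rightarrow> bool" where
  "stops_at \<tau> n \<omega> \<longleftrightarrow> \<tau> n \<omega> \<and> (\<forall>i. 0 < i \<and> i < n \<longrightarrow> \<not> \<tau> i \<omega>)"

text \<open>Off the event that some tau i fires, stop_time is LEAST of an empty set and hence
  unspecified, so the lemmas about it assume that event.\<close>
lemma stop_time_spec:
  assumes "\<exists>i>0. \<tau> i \<omega>"
  shows "0 < stop_time \<tau> \<omega>" "\<tau> (stop_time \<tau> \<omega>) \<omega>"
  using LeastI_ex[OF assms] unfolding stop_time_def by auto

lemma stops_at_iff_stop_time: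
  assumes "\<exists>i>0. \<tau> i \<omega>" and "0 < n"
  shows "stops_at \<tau> n \<omega> \<longleftrightarrow> stop_time \<tau> \<omega> = n"
proof
  assume "stops_at \<tau> n \<omega>"
  then show "stop_time \<tau> \<omega> = n"
    using assms(2) unfolding stop_time_def stops_at_def by (intro Least_equality) (auto simp: not_less[symmetric])
next
  assume "stop_time \<tau> \<omega> = n"
  moreover have "\<not> (0 < i \<and> \<tau> i \<omega>)" if "i < stop_time \<tau> \<omega>" for i
    using not_less_Least[of i "\<lambda>i. 0 < i \<and> \<tau> i \<omega>"] that unfolding stop_time_def by blast
  ultimately show "stops_at \<tau> n \<omega>" using stop_time_spec[of \<tau> \<omega>, OF assms(1)] by (auto simp: stops_at_def)
qed

lemma stopped_eq_suminf_stops_at: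
  fixes H :: "nat \<Rightarrow> (nat \<Rightarrow> bool \<times> real) \<Rightarrow> ennreal"
  assumes "\<exists>i>0. \<tau> i \<omega>"
  shows "H (stop_time \<tau> \<omega>) \<omega> = (\<Sum>n. of_bool (stops_at \<tau> (Suc n) \<omega>) * H (Suc n) \<omega>)"
proof -
  define m where "m = stop_time \<tau> \<omega> - 1"
  have m: "stop_time \<tau> \<omega> = Suc m" using stop_time_spec(1)[of \<tau> \<omega>, OF assms] by (simp add: m_def)
  have "(\<lambda>n. of_bool (stops_at \<tau> (Suc n) \<omega>) * H (Suc n) \<omega>) = (\<lambda>n. if n = m then H (Suc m) \<omega> else 0)"
    using stops_at_iff_stop_time[of \<tau> \<omega>, OF assms] m by (auto simp: fun_eq_iff)
  moreover have "(\<lambda>n. if n = m then H (Suc m) \<omega> else 0) sums H (Suc m) \<omega>"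
    using sums_single[of m "\<lambda>_. H (Suc m) \<omega>"] by simp
  ultimately show ?thesis by (simp add: sums_iff m)
qed

context
  fixes \<tau> \<gamma> :: "nat \<Rightarrow> (nat \<Rightarrow> bool \<times> real) \<Rightarrow> bool"
  assumes \<tau>_measurable: "\<And>i. \<tau> i \<in> event_space \<rightarrow>\<^sub>M count_space UNIV"
    and \<tau>_depends: "\<And>i. depends_on_first i (\<tau> i)"
    and \<gamma>_measurable: "\<And>n. \<gamma> n \<in> event_space \<rightarrow>\<^sub>M count_space UNIV"
    and \<gamma>_depends: "\<And>n. depends_on_first n (\<gamma> n)"
begin

definition likelihood_ratio :: "real \<Rightarrow> real \<Rightarrow> (nat \<Rightarrow> bool \<times> real) \<Rightarrow> real" where
  "likelihood_ratio p q \<omega> = (\<Prod>j<stop_time \<tau> \<omega>. step_ratio p q (\<omega> j))"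

lemma likelihood_ratio_nonneg: "0 < p \<Longrightarrow> p < 1 \<Longrightarrow> 0 \<le> q \<Longrightarrow> q \<le> 1 \<Longrightarrow> 0 \<le> likelihood_ratio p q \<omega>"
  unfolding likelihood_ratio_def by (intro prod_nonneg step_ratio_nonneg) auto

lemma measurable_stop_time: "stop_time \<tau> \<in> event_space \<rightarrow>\<^sub>M count_space UNIV"
  unfolding stop_time_def[abs_def] using \<tau>_measurable by measurable

lemma measurable_stops_at: "stops_at \<tau> n \<in> event_space \<rightarrow>\<^sub>M count_space UNIV"
  unfolding stops_at_def[abs_def] using \<tau>_measurable by measurable

lemma measurable_likelihood_ratio: "likelihood_ratio p q \<in> borel_measurable event_space"
  using measurable_compose_countable'[where I=UNIV, OF measurable_prod_step_ratio measurable_stop_time]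
  by (simp add: likelihood_ratio_def[abs_def])

lemma depends_on_first_stops_at: "depends_on_first n (stops_at \<tau> n)"
  using \<tau>_depends unfolding depends_on_first_def stops_at_def
  by (metis (no_types, lifting) less_le_trans nat_less_le)

lemma nn_integral_stopped_change:
  fixes G :: "nat \<Rightarrow> (nat \<Rightarrow> bool \<times> real) \<Rightarrow> ennreal"
  assumes p: "0 < p" "p < 1" and q: "0 \<le> q" "q \<le> 1"
    and stops_p: "AE \<omega> in seq_space p. \<exists>i>0. \<tau> i \<omega>" and stops_q: "AE \<omega> in seq_space q. \<exists>i>0. \<tau> i \<omega>"
    and G_measurable: "\<And>n. G n \<in> borel_measurable event_space" and G_depends: "\<And>n. depends_on_first n (G n)"
  shows "(\<integral>\<^sup>+\<omega>. G (stop_time \<tau> \<omega>) \<omega> \<partial>seq_space q)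
       = (\<integral>\<^sup>+\<omega>. ennreal (likelihood_ratio p q \<omega>) * G (stop_time \<tau> \<omega>) \<omega> \<partial>seq_space p)"
proof -
  define H where "H n \<omega> = ennreal (\<Prod>j<n. step_ratio p q (\<omega> j)) * G n \<omega>" for n \<omega>
  have stopped_G: "(\<lambda>n \<omega>. of_bool (stops_at \<tau> n \<omega>) * G n \<omega>) n \<in> borel_measurable event_space" for n
    using measurable_stops_at G_measurable by measurable
  have "depends_on_first n (\<lambda>\<omega>. of_bool (stops_at \<tau> n \<omega>) * G n \<omega>)" for n
    using depends_on_first_stops_at G_depends by (rule depends_on_first_comp2)
  then have change: "(\<integral>\<^sup>+\<omega>. of_bool (stops_at \<tau> n \<omega>) * G n \<omega> \<partial>seq_space q)
      = (\<integral>\<^sup>+\<omega>. of_bool (stops_at \<tau> n \<omega>) * H n \<omega> \<partial>seq_space p)" for n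
    using nn_integral_seq_space_change[OF p q stopped_G] by (simp add: H_def ac_simps)
  have H_measurable: "(\<lambda>\<omega>. of_bool (stops_at \<tau> n \<omega>) * H n \<omega>) \<in> borel_measurable event_space" for n
    unfolding H_def using measurable_stops_at G_measurable measurable_prod_step_ratio by measurable
  have "(\<integral>\<^sup>+\<omega>. G (stop_time \<tau> \<omega>) \<omega> \<partial>seq_space q)
      = (\<integral>\<^sup>+\<omega>. (\<Sum>n. of_bool (stops_at \<tau> (Suc n) \<omega>) * G (Suc n) \<omega>) \<partial>seq_space q)"
    using stops_q by (intro nn_integral_cong_AE) (auto elim!: AE_mp intro: stopped_eq_suminf_stops_at)
  also have "\<dots> = (\<Sum>n. \<integral>\<^sup>+\<omega>. of_bool (stops_at \<tau> (Suc n) \<omega>) * G (Suc n) \<omega> \<partial>seq_space q)"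
    using stopped_G by (intro nn_integral_suminf) (simp add: measurable_seq_space_iff)
  also have "\<dots> = (\<Sum>n. \<integral>\<^sup>+\<omega>. of_bool (stops_at \<tau> (Suc n) \<omega>) * H (Suc n) \<omega> \<partial>seq_space p)"
    by (simp only: change)
  also have "\<dots> = (\<integral>\<^sup>+\<omega>. (\<Sum>n. of_bool (stops_at \<tau> (Suc n) \<omega>) * H (Suc n) \<omega>) \<partial>seq_space p)"
    using H_measurable by (intro nn_integral_suminf[symmetric]) (simp add: measurable_seq_space_iff)
  also have "\<dots> = (\<integral>\<^sup>+\<omega>. H (stop_time \<tau> \<omega>) \<omega> \<partial>seq_space p)"
    using stops_p by (intro nn_integral_cong_AE) (auto elim!: AE_mp intro: stopped_eq_suminf_stops_at[symmetric])
  finally show ?thesis by (simp add: H_def likelihood_ratio_def)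
qed

lemma has_bochner_integral_stopped_change:
  fixes G :: "nat \<Rightarrow> (nat \<Rightarrow> bool \<times> real) \<Rightarrow> real"
  assumes p: "0 < p" "p < 1" and q: "0 \<le> q" "q \<le> 1"
    and stops_p: "AE \<omega> in seq_space p. \<exists>i>0. \<tau> i \<omega>" and stops_q: "AE \<omega> in seq_space q. \<exists>i>0. \<tau> i \<omega>"
    and G_measurable: "\<And>n. G n \<in> borel_measurable event_space" and G_depends: "\<And>n. depends_on_first n (G n)"
    and G_nonneg: "\<And>n \<omega>. 0 \<le> G n \<omega>"
    and G_integral: "has_bochner_integral (seq_space q) (\<lambda>\<omega>. G (stop_time \<tau> \<omega>) \<omega>) I"
  shows "has_bochner_integral (seq_space p) (\<lambda>\<omega>. likelihood_ratio p q \<omega> * G (stop_time \<tau> \<omega>) \<omega>) I"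
proof -
  have "depends_on_first n (\<lambda>\<omega>. ennreal (G n \<omega>))" for n
    using G_depends by (rule depends_on_first_comp)
  then have "(\<integral>\<^sup>+\<omega>. ennreal (likelihood_ratio p q \<omega> * G (stop_time \<tau> \<omega>) \<omega>) \<partial>seq_space p)
      = (\<integral>\<^sup>+\<omega>. ennreal (G (stop_time \<tau> \<omega>) \<omega>) \<partial>seq_space q)"
    using nn_integral_stopped_change[OF p q stops_p stops_q, of "\<lambda>n \<omega>. ennreal (G n \<omega>)"] G_measurable
    by (simp add: ennreal_mult G_nonneg likelihood_ratio_nonneg[OF p q])
  also have "\<dots> = ennreal I"
    using G_integral G_nonneg by (auto simp: has_bochner_integral_iff intro: nn_integral_eq_integral)
  finally show ?thesis
    using G_integral p q G_nonneg G_measurable measurable_likelihood_ratio measurable_stop_time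
    unfolding has_bochner_integral_iff
    by (subst (asm) nn_integral_eq_integrable)
      (auto intro!: Bochner_Integration.integral_nonneg mult_nonneg_nonneg likelihood_ratio_nonneg
        simp: measurable_seq_space_iff measurable_compose_countable'[where I=UNIV])
qed

lemma has_bochner_integral_likelihood_ratio:
  assumes "0 < p" "p < 1" "0 \<le> q" "q \<le> 1"
    and "AE \<omega> in seq_space p. \<exists>i>0. \<tau> i \<omega>" "AE \<omega> in seq_space q. \<exists>i>0. \<tau> i \<omega>"
  shows "has_bochner_integral (seq_space p) (likelihood_ratio p q) 1"
proof -
  interpret Q: prob_space "seq_space q" by (rule prob_space_seq_space)
  have "depends_on_first n (\<lambda>_. 1 :: real)" for n by (simp add: depends_on_first_def)
  moreover have "has_bochner_integral (seq_space q) (\<lambda>_. 1 :: real) 1"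
    by (simp add: has_bochner_integral_iff Q.prob_space)
  ultimately show ?thesis
    using has_bochner_integral_stopped_change[where G="\<lambda>_ _. 1", OF assms borel_measurable_const] by fastforce
qed

lemma measurable_factory_output: "factory_output \<tau> \<gamma> \<in> event_space \<rightarrow>\<^sub>M count_space UNIV"
  unfolding factory_output_def[abs_def]
  by (rule measurable_compose_countable'[where I=UNIV, OF \<gamma>_measurable measurable_stop_time]) simp

lemma has_bochner_integral_factory_output:
  "has_bochner_integral (seq_space q) (\<lambda>\<omega>. of_bool (factory_output \<tau> \<gamma> \<omega>))
     (measure (seq_space q) {\<omega> \<in> space (seq_space q). factory_output \<tau> \<gamma> \<omega>})"
proof -
  interpret Q: prob_space "seq_space q" by (rule prob_space_seq_space)
  have "factory_output \<tau> \<gamma> \<in> seq_space q \<rightarrow>\<^sub>M count_space UNIV"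
    using measurable_factory_output measurable_seq_space_iff by blast
  then have "{\<omega> \<in> space (seq_space q). factory_output \<tau> \<gamma> \<omega>} \<in> sets (seq_space q)"
    by (intro predE) (simp add: pred_def)
  then have "has_bochner_integral (seq_space q) (indicator {\<omega> \<in> space (seq_space q). factory_output \<tau> \<gamma> \<omega>})
      (measure (seq_space q) {\<omega> \<in> space (seq_space q). factory_output \<tau> \<gamma> \<omega>})"
    by (intro has_bochner_integral_real_indicator) (auto simp: Q.emeasure_eq_measure)
  moreover have "indicator {\<omega> \<in> space (seq_space q). factory_output \<tau> \<gamma> \<omega>} = (\<lambda>\<omega>. of_bool (factory_output \<tau> \<gamma> \<omega>) :: real)"
    by (simp add: space_seq_space fun_eq_iff)
  ultimately show ?thesis by simp
qed

lemma has_bochner_integral_likelihood_ratio_factory_output: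
  assumes "0 < p" "p < 1" "0 \<le> q" "q \<le> 1"
    and "AE \<omega> in seq_space p. \<exists>i>0. \<tau> i \<omega>" "AE \<omega> in seq_space q. \<exists>i>0. \<tau> i \<omega>"
  shows "has_bochner_integral (seq_space p) (\<lambda>\<omega>. likelihood_ratio p q \<omega> * of_bool (factory_output \<tau> \<gamma> \<omega>))
    (measure (seq_space q) {\<omega> \<in> space (seq_space q). factory_output \<tau> \<gamma> \<omega>})"
proof -
  have "(\<lambda>\<omega>. of_bool (\<gamma> n \<omega>) :: real) \<in> borel_measurable event_space" for n
    by (rule measurable_compose[OF \<gamma>_measurable]) simp
  moreover have "depends_on_first n (\<lambda>\<omega>. of_bool (\<gamma> n \<omega>) :: real)" for n
    using \<gamma>_depends by (rule depends_on_first_comp)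
  ultimately show ?thesis
    using has_bochner_integral_stopped_change[OF assms, where G="\<lambda>n \<omega>. of_bool (\<gamma> n \<omega>)"]
      has_bochner_integral_factory_output[of q]
    unfolding factory_output_def by simp
qed

text \<open>By likelihood_ratio_square, E_p tilt_weight = (E_p L_q^2 - 1) / chi; unlike that quotient it is
  the expectation of a single random variable, which tends to N pointwise as q tends to p.\<close>
definition tilt_weight :: "real \<Rightarrow> real \<Rightarrow> (nat \<Rightarrow> bool \<times> real) \<Rightarrow> real" where
  "tilt_weight p q \<omega> = (\<Sum>i<stop_time \<tau> \<omega>. (1 + chi_square p q) ^ i) * likelihood_ratio p (squared_tilt p q) \<omega>"

lemma likelihood_ratio_square:
  assumes "0 < p" "p < 1"
  shows "(likelihood_ratio p q \<omega>)\<^sup>2 = likelihood_ratio p (squared_tilt p q) \<omega> + chi_square p q * tilt_weight p q \<omega>"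
proof -
  define n where "n = stop_time \<tau> \<omega>"
  have "(1 + chi_square p q) ^ n = 1 + chi_square p q * (\<Sum>i<n. (1 + chi_square p q) ^ i)"
    using one_diff_power_eq[of "1 + chi_square p q" n] by (simp add: algebra_simps)
  then show ?thesis
    using prod_step_ratio_square[OF assms, where n=n and q=q and \<omega>=\<omega>]
    by (simp add: likelihood_ratio_def tilt_weight_def n_def[symmetric] algebra_simps)
qed

lemma has_bochner_integral_likelihood_ratio_minus_one_square:
  assumes p: "0 < p" "p < 1" and q: "0 \<le> q" "q \<le> 1" and tilt: "0 \<le> squared_tilt p q" "squared_tilt p q \<le> 1"
    and stops_p: "AE \<omega> in seq_space p. \<exists>i>0. \<tau> i \<omega>" and stops_q: "AE \<omega> in seq_space q. \<exists>i>0. \<tau> i \<omega>"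
    and stops_tilt: "AE \<omega> in seq_space (squared_tilt p q). \<exists>i>0. \<tau> i \<omega>"
    and weight: "has_bochner_integral (seq_space p) (tilt_weight p q) W"
  shows "has_bochner_integral (seq_space p) (\<lambda>\<omega>. (likelihood_ratio p q \<omega> - 1)\<^sup>2) (chi_square p q * W)"
proof -
  interpret P: prob_space "seq_space p" by (rule prob_space_seq_space)
  have one: "has_bochner_integral (seq_space p) (\<lambda>_. 1) (1 :: real)"
    by (simp add: has_bochner_integral_iff P.prob_space)
  have "has_bochner_integral (seq_space p)
      (\<lambda>\<omega>. likelihood_ratio p (squared_tilt p q) \<omega> + chi_square p q * tilt_weight p q \<omega>
        - 2 * likelihood_ratio p q \<omega> + 1) (1 + chi_square p q * W - 2 * 1 + 1)"
    using has_bochner_integral_likelihood_ratio[OF p q stops_p stops_q]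
      has_bochner_integral_likelihood_ratio[OF p tilt stops_p stops_tilt] weight one
    by (intro has_bochner_integral_add has_bochner_integral_diff has_bochner_integral_mult_right)
  moreover have "(likelihood_ratio p q \<omega> - 1)\<^sup>2 = likelihood_ratio p (squared_tilt p q) \<omega>
      + chi_square p q * tilt_weight p q \<omega> - 2 * likelihood_ratio p q \<omega> + 1" for \<omega>
    by (simp add: power2_diff likelihood_ratio_square[OF p])
  ultimately show ?thesis by simp
qed

lemma factory_output_difference_quotient_square_le:
  assumes p: "0 < p" "p < 1" and q: "0 \<le> q" "q \<le> 1" "q \<noteq> p"
    and tilt: "0 \<le> squared_tilt p q" "squared_tilt p q \<le> 1"
    and stops_p: "AE \<omega> in seq_space p. \<exists>i>0. \<tau> i \<omega>" and stops_q: "AE \<omega> in seq_space q. \<exists>i>0. \<tau> i \<omega>"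
    and stops_tilt: "AE \<omega> in seq_space (squared_tilt p q). \<exists>i>0. \<tau> i \<omega>"
    and weight: "integrable (seq_space p) (tilt_weight p q)"
  shows "((measure (seq_space q) {\<omega> \<in> space (seq_space q). factory_output \<tau> \<gamma> \<omega>}
           - measure (seq_space p) {\<omega> \<in> space (seq_space p). factory_output \<tau> \<gamma> \<omega>}) / (q - p))\<^sup>2
         \<le> prob_space.variance (seq_space p) (\<lambda>\<omega>. of_bool (factory_output \<tau> \<gamma> \<omega>) :: real)
           * (\<integral>\<omega>. tilt_weight p q \<omega> \<partial>seq_space p) / (p * (1 - p))"
proof -
  interpret P: prob_space "seq_space p" by (rule prob_space_seq_space)
  define X where "X = (\<lambda>\<omega>. of_bool (factory_output \<tau> \<gamma> \<omega>) :: real)"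
  define L where "L = likelihood_ratio p q"
  define Pp where "Pp = measure (seq_space p) {\<omega> \<in> space (seq_space p). factory_output \<tau> \<gamma> \<omega>}"
  define Pq where "Pq = measure (seq_space q) {\<omega> \<in> space (seq_space q). factory_output \<tau> \<gamma> \<omega>}"
  define W where "W = P.expectation (tilt_weight p q)"
  have X: "has_bochner_integral (seq_space p) X Pp"
    unfolding X_def Pp_def by (rule has_bochner_integral_factory_output)
  have L: "has_bochner_integral (seq_space p) L 1"
    unfolding L_def by (rule has_bochner_integral_likelihood_ratio[OF p q(1,2) stops_p stops_q])
  have LX: "has_bochner_integral (seq_space p) (\<lambda>\<omega>. L \<omega> * X \<omega>) Pq"
    unfolding L_def X_def Pq_def by (rule has_bochner_integral_likelihood_ratio_factory_output[OF p q(1,2) stops_p stops_q])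
  have V: "has_bochner_integral (seq_space p) (\<lambda>\<omega>. (L \<omega> - 1)\<^sup>2) (chi_square p q * W)"
    unfolding L_def W_def
    by (rule has_bochner_integral_likelihood_ratio_minus_one_square[OF p q(1,2) tilt stops_p stops_q stops_tilt])
      (use weight in \<open>simp add: has_bochner_integral_iff\<close>)
  have "0 \<le> Pp" "Pp \<le> 1" by (simp_all add: Pp_def)
  then have U: "integrable (seq_space p) (\<lambda>\<omega>. (X \<omega> - Pp)\<^sup>2)"
    using X by (intro P.integrable_const_bound[where B=1]) (auto simp: X_def abs_square_le_1 has_bochner_integral_iff)
  have "has_bochner_integral (seq_space p) (\<lambda>\<omega>. L \<omega> * X \<omega> - X \<omega> - Pp * L \<omega> + Pp) (Pq - Pp - Pp * 1 + Pp)"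
    using X L LX by (intro has_bochner_integral_add has_bochner_integral_diff has_bochner_integral_mult_right)
      (simp_all add: has_bochner_integral_iff P.prob_space)
  moreover have "(X \<omega> - Pp) * (L \<omega> - 1) = L \<omega> * X \<omega> - X \<omega> - Pp * L \<omega> + Pp" for \<omega>
    by (simp add: algebra_simps)
  ultimately have UV: "has_bochner_integral (seq_space p) (\<lambda>\<omega>. (X \<omega> - Pp) * (L \<omega> - 1)) (Pq - Pp)"
    by simp
  have "(Pq - Pp)\<^sup>2 \<le> P.variance X * (chi_square p q * W)"
    using Cauchy_Schwarz_integral[of "seq_space p" "\<lambda>\<omega>. X \<omega> - Pp" "\<lambda>\<omega>. L \<omega> - 1"] U V UV X
    by (simp add: has_bochner_integral_iff)
  then have "((Pq - Pp) / (q - p))\<^sup>2 \<le> P.variance X * W * (chi_square p q / (q - p)\<^sup>2)"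
    by (simp add: power_divide divide_right_mono mult_ac)
  also have "chi_square p q / (q - p)\<^sup>2 = 1 / (p * (1 - p))"
    using q(3) by (simp add: chi_square_def)
  finally show ?thesis by (simp add: X_def Pp_def Pq_def W_def)
qed

lemma measurable_tilt_weight: "tilt_weight p q \<in> borel_measurable event_space"
proof -
  have "(\<lambda>\<omega>. (\<lambda>n \<omega>. \<Sum>i<n. (1 + chi_square p q) ^ i) (stop_time \<tau> \<omega>) \<omega>) \<in> borel_measurable event_space"
    by (rule measurable_compose_countable'[where I=UNIV, OF _ measurable_stop_time]) simp_all
  then show ?thesis
    unfolding tilt_weight_def[abs_def] using measurable_likelihood_ratio by measurable
qed

lemma tendsto_integral_tilt_weight:
  assumes p: "0 < p" "p < 1" and \<rho>: "1 < \<rho>"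
    and dominant: "integrable (seq_space p) (\<lambda>\<omega>. (\<rho> ^ 3) ^ stop_time \<tau> \<omega>)"
    and q_lim: "q \<longlonglongrightarrow> p" and q: "\<And>k. p \<le> q k" "\<And>k. q k \<le> 1" "\<And>k. q k \<le> \<rho> * p"
  shows "integrable (seq_space p) (tilt_weight p (q k))"
    and "integrable (seq_space p) (\<lambda>\<omega>. real (stop_time \<tau> \<omega>))"
    and "(\<lambda>k. \<integral>\<omega>. tilt_weight p (q k) \<omega> \<partial>seq_space p) \<longlonglongrightarrow> (\<integral>\<omega>. real (stop_time \<tau> \<omega>) \<partial>seq_space p)"
proof -
  have N_measurable: "(\<lambda>\<omega>. real (stop_time \<tau> \<omega>)) \<in> borel_measurable (seq_space p)"
    using measurable_stop_time by (simp add: measurable_seq_space_iff)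
  have weight_measurable: "tilt_weight p (q k) \<in> borel_measurable (seq_space p)" for k
    using measurable_tilt_weight by (simp add: measurable_seq_space_iff)
  have bound: "norm (tilt_weight p (q k) \<omega>) \<le> (\<rho> ^ 3) ^ stop_time \<tau> \<omega> / (\<rho> - 1)" for k \<omega>
    using sum_power_mult_prod_step_ratio_bounds[OF p q(1,2,3) \<rho>, where n="stop_time \<tau> \<omega>" and \<omega>=\<omega>]
    by (simp add: tilt_weight_def likelihood_ratio_def power_mult)
  have "(\<lambda>k. tilt_weight p (q k) \<omega>) \<longlonglongrightarrow> (\<Sum>i<stop_time \<tau> \<omega>. (1 + 0) ^ i) * (\<Prod>j<stop_time \<tau> \<omega>. 1)" for \<omega>
    unfolding tilt_weight_def likelihood_ratio_def
    by (intro tendsto_intros tendsto_chi_square tendsto_step_ratio tendsto_squared_tilt p q_lim)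
  then have limit: "(\<lambda>k. tilt_weight p (q k) \<omega>) \<longlonglongrightarrow> real (stop_time \<tau> \<omega>)" for \<omega>
    by simp
  note dominated = N_measurable weight_measurable integrable_divide[OF dominant] AE_I2[OF limit] AE_I2[OF bound]
  show "integrable (seq_space p) (tilt_weight p (q k))"
    by (rule integrable_dominated_convergence2[OF dominated])
  show "integrable (seq_space p) (\<lambda>\<omega>. real (stop_time \<tau> \<omega>))"
    by (rule integrable_dominated_convergence[OF dominated])
  show "(\<lambda>k. \<integral>\<omega>. tilt_weight p (q k) \<omega> \<partial>seq_space p) \<longlonglongrightarrow> (\<integral>\<omega>. real (stop_time \<tau> \<omega>) \<partial>seq_space p)"
    by (rule integral_dominated_convergence[OF dominated])
qed

lemma integral_stop_time_ge_one:
  assumes "AE \<omega> in seq_space p. \<exists>i>0. \<tau> i \<omega>" and "integrable (seq_space p) (\<lambda>\<omega>. real (stop_time \<tau> \<omega>))"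
  shows "1 \<le> (\<integral>\<omega>. real (stop_time \<tau> \<omega>) \<partial>seq_space p)"
proof -
  interpret P: prob_space "seq_space p" by (rule prob_space_seq_space)
  have "AE \<omega> in seq_space p. 1 \<le> real (stop_time \<tau> \<omega>)"
    using assms(1)
  proof (rule AE_mp, intro AE_I2 impI)
    fix \<omega> assume "\<exists>i>0. \<tau> i \<omega>"
    then show "1 \<le> real (stop_time \<tau> \<omega>)" using stop_time_spec(1)[of \<tau> \<omega>] by simp
  qed
  then have "P.expectation (\<lambda>_. 1) \<le> P.expectation (\<lambda>\<omega>. real (stop_time \<tau> \<omega>))"
    by (intro integral_mono_AE assms(2)) simp
  then show ?thesis by (simp add: P.prob_space)
qed

lemma sequential_cramer_rao:
  fixes S :: "real set" and f :: "real \<Rightarrow> real"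
  assumes S: "open S" "S \<subseteq> {0<..<1}" "p \<in> S"
    and stops: "\<And>q. q \<in> S \<Longrightarrow> AE \<omega> in seq_space q. \<exists>i>0. \<tau> i \<omega>"
    and output_prob: "\<And>q. q \<in> S \<Longrightarrow> measure (seq_space q) {\<omega> \<in> space (seq_space q). factory_output \<tau> \<gamma> \<omega>} = f q"
    and tail: "\<And>n. measure (seq_space p) {\<omega> \<in> space (seq_space p). n < stop_time \<tau> \<omega>} \<le> A * \<beta> ^ n"
    and A: "0 < A" and \<beta>: "\<beta> < 1"
    and f': "(f has_real_derivative f') (at p)"
  shows "f'\<^sup>2 * p * (1 - p) / prob_space.expectation (seq_space p) (\<lambda>\<omega>. real (stop_time \<tau> \<omega>))
      \<le> prob_space.variance (seq_space p) (\<lambda>\<omega>. of_bool (factory_output \<tau> \<gamma> \<omega>) :: real)"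
proof -
  interpret P: prob_space "seq_space p" by (rule prob_space_seq_space)
  define V where "V = P.variance (\<lambda>\<omega>. of_bool (factory_output \<tau> \<gamma> \<omega>) :: real)"
  define EN where "EN = P.expectation (\<lambda>\<omega>. real (stop_time \<tau> \<omega>))"
  have p: "0 < p" "p < 1" using S by auto
  obtain \<theta> :: real where \<theta>: "1 < \<theta>" "integrable (seq_space p) (\<lambda>\<omega>. \<theta> ^ stop_time \<tau> \<omega>)"
    using P.integrable_power_of_geometric_tail[OF _ tail A \<beta>] measurable_stop_time
    by (auto simp: measurable_seq_space_iff)
  define \<rho> where "\<rho> = root 3 \<theta>"
  have \<rho>: "1 < \<rho>" "\<rho> ^ 3 = \<theta>" using \<theta>(1) by (auto simp: \<rho>_def real_root_gt_1_iff)
  obtain q where q_lim: "q \<longlonglongrightarrow> p" and q: "\<And>k. q k \<in> S" "\<And>k. p < q k" "\<And>k. q k \<le> \<rho> * p"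
    using open_obtains_seq_from_above[OF S(1,3) p(1) \<rho>(1)] by blast
  have q01: "0 \<le> q k" "q k \<le> 1" for k using q(1)[of k] S(2) by auto
  note weight = tendsto_integral_tilt_weight[OF p \<rho>(1) \<theta>(2)[folded \<rho>(2)] q_lim less_imp_le[OF q(2)] q01(2) q(3)]
  have "\<forall>\<^sub>F k in sequentially. squared_tilt p (q k) \<in> S"
    using tendsto_squared_tilt[OF p q_lim] S(1,3) by (rule topological_tendstoD)
  then have quotient_bound: "\<forall>\<^sub>F k in sequentially.
      ((f (q k) - f p) / (q k - p))\<^sup>2 \<le> V * (\<integral>\<omega>. tilt_weight p (q k) \<omega> \<partial>seq_space p) / (p * (1 - p))"
  proof (rule eventually_mono)
    fix k assume "squared_tilt p (q k) \<in> S"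
    with S(2) have "0 \<le> squared_tilt p (q k)" "squared_tilt p (q k) \<le> 1" by auto
    from factory_output_difference_quotient_square_le[OF p q01 _ this stops[OF S(3)] stops[OF q(1)]
        stops[OF \<open>squared_tilt p (q k) \<in> S\<close>] weight(1)] q(2)[of k]
    show "((f (q k) - f p) / (q k - p))\<^sup>2 \<le> V * (\<integral>\<omega>. tilt_weight p (q k) \<omega> \<partial>seq_space p) / (p * (1 - p))"
      by (simp add: output_prob[OF S(3)] output_prob[OF q(1)] V_def)
  qed
  have "(\<lambda>k. (f (q k) - f p) / (q k - p)) \<longlonglongrightarrow> f'"
    using q(2) by (intro tendsto_difference_quotient[OF f' q_lim]) (simp add: less_imp_neq[symmetric])
  then have lhs: "(\<lambda>k. ((f (q k) - f p) / (q k - p))\<^sup>2) \<longlonglongrightarrow> f'\<^sup>2"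
    by (rule tendsto_power)
  have rhs: "(\<lambda>k. V * (\<integral>\<omega>. tilt_weight p (q k) \<omega> \<partial>seq_space p) / (p * (1 - p))) \<longlonglongrightarrow> V * EN / (p * (1 - p))"
    unfolding EN_def by (intro tendsto_intros weight(3)) (use p in simp)
  have "f'\<^sup>2 \<le> V * EN / (p * (1 - p))"
    by (rule tendsto_le[OF trivial_limit_sequentially rhs lhs quotient_bound])
  moreover have "1 \<le> EN"
    unfolding EN_def using integral_stop_time_ge_one[OF stops[OF S(3)] weight(2)] .
  ultimately show ?thesis
    using p by (simp add: V_def EN_def divide_simps mult.commute mult.left_commute)
qed

end

theorem lemma2:
  fixes S :: "real set" and f :: "real \<Rightarrow> real"
    and \<tau> \<gamma> :: "nat \<Rightarrow> (nat \<Rightarrow> bool \<times> real) \<Rightarrow> bool"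
  assumes "open S" and "S \<subseteq> {0<..<1}"
    and "\<forall>p\<in>S. f p \<in> {0<..<1}"
    and "\<forall>p\<in>S. f differentiable (at p)"
    and "bernoulli_factory S f \<tau> \<gamma>"
    and "fast_factory S \<tau>"
    and "p \<in> S"
  shows "prob_space.variance (seq_space p) (\<lambda>\<omega>. of_bool (factory_output \<tau> \<gamma> \<omega>) :: real)
           \<ge> (deriv f p)\<^sup>2 * p * (1 - p)
              / prob_space.expectation (seq_space p) (\<lambda>\<omega>. real (stop_time \<tau> \<omega>))"
proof -
  obtain A \<beta> where "0 < A" "\<beta> < 1"
    and "\<And>n. measure (seq_space p) {\<omega> \<in> space (seq_space p). stop_time \<tau> \<omega> > n} \<le> A * \<beta> ^ n"
    using \<open>fast_factory S \<tau>\<close> \<open>p \<in> S\<close> unfolding fast_factory_def by blast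
  moreover have "(f has_real_derivative deriv f p) (at p)"
    using assms(4,7) by (simp add: DERIV_deriv_iff_real_differentiable)
  ultimately show ?thesis
    using \<open>bernoulli_factory S f \<tau> \<gamma>\<close> assms(1,2,7) unfolding bernoulli_factory_def
    by (intro sequential_cramer_rao) auto
qed

end
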